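(* Let $n \ge 1$ and let $\vec x_{1,\text{pred}},\dots,\vec x_{n,\text{pred}} \in \mathbb{R}^3$ and $\vec x_{1,\text{gt}},\dots,\vec x_{n,\text{gt}} \in \mathbb{R}^3$ be two ordered families of points (predicted and ground-truth atom positions). Define $$\text{PM}_{\text{atom}}^2 = \frac{1}{n^2}\sum_{i=1}^{n}\sum_{j=1}^{n}\Big(\lVert \vec x_{i,\text{pred}}-\vec x_{j,\text{pred}}\rVert - \lVert \vec x_{i,\text{gt}}-\vec x_{j,\text{gt}}\rVert\Big)^2,\qquad \text{RMSD}_{\text{atom}}^2 = \frac{1}{n}\sum_{i=1}^{n}\lVert \vec x_{i,\text{pred}}-\vec x_{i,\text{gt}}\rVert^2,$$ where $\lVert\cdot\rVert$ is the Euclidean norm. Then $\text{PM}_{\text{atom}}^2 \le 2\,\text{RMSD}_{\text{atom}}^2$. *)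

theory Defs
  imports "HOL-Analysis.Analysis"
begin

definition PM_atom_sq :: "nat \<Rightarrow> (nat \<Rightarrow> real^3) \<Rightarrow> (nat \<Rightarrow> real^3) \<Rightarrow> real" where
  "PM_atom_sq n xp xg =
     (1 / (real n)^2) * (\<Sum>i=1..n. \<Sum>j=1..n. (norm (xp i - xp j) - norm (xg i - xg j))^2)"

definition RMSD_atom_sq :: "nat \<Rightarrow> (nat \<Rightarrow> real^3) \<Rightarrow> (nat \<Rightarrow> real^3) \<Rightarrow> real" where
  "RMSD_atom_sq n xp xg = (1 / real n) * (\<Sum>i=1..n. (norm (xp i - xg i))^2)"

end

theory Submission
  imports Defs
begin

text \<open>With displacements \<open>e i = xp i - xg i\<close>, the reverse triangle inequality bounds each
  pairwise term by \<open>\<parallel>e i - e j\<parallel>\<^sup>2\<close>, and expanding the square gives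
  \<open>\<Sum>i j. \<parallel>e i - e j\<parallel>\<^sup>2 = 2 n \<Sum>i. \<parallel>e i\<parallel>\<^sup>2 - 2 \<parallel>\<Sum>i. e i\<parallel>\<^sup>2 \<le> 2 n \<Sum>i. \<parallel>e i\<parallel>\<^sup>2\<close>.\<close>

lemma power2_norm_diff_minus_norm_diff_le:
  fixes a b c d :: "'a::real_normed_vector"
  shows "(norm (a - b) - norm (c - d))\<^sup>2 \<le> (norm ((a - c) - (b - d)))\<^sup>2"
proof -
  have "\<bar>norm (a - b) - norm (c - d)\<bar> \<le> norm ((a - b) - (c - d))"
    by (rule norm_triangle_ineq3)
  also have "(a - b) - (c - d) = (a - c) - (b - d)"
    by (simp add: algebra_simps)
  finally show ?thesis
    by (metis abs_ge_zero power2_abs power_mono)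
qed

lemma sum_pairwise_power2_norm_diff:
  fixes e :: "'i \<Rightarrow> 'a::real_inner"
  assumes "finite I"
  shows "(\<Sum>i\<in>I. \<Sum>j\<in>I. (norm (e i - e j))\<^sup>2)
           = 2 * real (card I) * (\<Sum>i\<in>I. (norm (e i))\<^sup>2) - 2 * (norm (sum e I))\<^sup>2"
proof -
  have expand: "(norm (e i - e j))\<^sup>2 = (norm (e i))\<^sup>2 + (norm (e j))\<^sup>2 - 2 * inner (e i) (e j)"
    for i j
    by (simp add: power2_norm_eq_inner inner_diff algebra_simps inner_commute)
  have cross: "(\<Sum>i\<in>I. \<Sum>j\<in>I. inner (e i) (e j)) = (norm (sum e I))\<^sup>2"
    by (simp add: power2_norm_eq_inner inner_sum_left inner_sum_right
        sum.swap[of "\<lambda>i j. inner (e i) (e j)"])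
  show ?thesis
    using assms
    by (simp add: expand sum.distrib sum_subtractf sum_distrib_left[symmetric] cross
        sum_distrib_right[symmetric] sum.swap[of "\<lambda>i j. (norm (e j))\<^sup>2"] algebra_simps)
qed

lemma sum_pairwise_distance_deviation_le:
  fixes xp xg :: "'i \<Rightarrow> 'a::real_inner"
  assumes "finite I"
  shows "(\<Sum>i\<in>I. \<Sum>j\<in>I. (norm (xp i - xp j) - norm (xg i - xg j))\<^sup>2)
           \<le> 2 * real (card I) * (\<Sum>i\<in>I. (norm (xp i - xg i))\<^sup>2)"
proof -
  let ?e = "\<lambda>i. xp i - xg i"
  have "(\<Sum>i\<in>I. \<Sum>j\<in>I. (norm (xp i - xp j) - norm (xg i - xg j))\<^sup>2)
          \<le> (\<Sum>i\<in>I. \<Sum>j\<in>I. (norm (?e i - ?e j))\<^sup>2)"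
    by (intro sum_mono power2_norm_diff_minus_norm_diff_le)
  also have "\<dots> = 2 * real (card I) * (\<Sum>i\<in>I. (norm (?e i))\<^sup>2) - 2 * (norm (sum ?e I))\<^sup>2"
    using assms by (rule sum_pairwise_power2_norm_diff)
  also have "\<dots> \<le> 2 * real (card I) * (\<Sum>i\<in>I. (norm (?e i))\<^sup>2)"
    by simp
  finally show ?thesis .
qed

theorem theorem1:
  fixes n :: nat and xp xg :: "nat \<Rightarrow> real^3"
  assumes "n \<ge> 1"
  shows "PM_atom_sq n xp xg \<le> 2 * RMSD_atom_sq n xp xg"
proof -
  have n_pos: "real n > 0"
    using assms by simp
  have "PM_atom_sq n xp xg \<le> (1 / (real n)\<^sup>2) * (2 * real n * (\<Sum>i=1..n. (norm (xp i - xg i))\<^sup>2))"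
    unfolding PM_atom_sq_def
    using sum_pairwise_distance_deviation_le[of "{1..n}" xp xg]
    by (intro mult_left_mono) simp_all
  also have "\<dots> = 2 * RMSD_atom_sq n xp xg"
    using n_pos by (simp add: RMSD_atom_sq_def power2_eq_square)
  finally show ?thesis .
qed

end
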